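(* Let $\mu$ be a distribution on $\{0,1\}^{\mathbb{N}}$, let $X=(X_i)_{i\in\mathbb{N}}\sim\mu$ be defined on a probability space $(\Omega,\mathcal{F},\mathbb{P})$, and suppose $(\mathbb{N},\xi)$ is totally bounded. Suppose there exists $K\ge1$ such that for every $\varepsilon>0$ there exist events $(E_k)_{k\in\mathbb{N}}$ in $\mathcal{F}$ and a finite set $J\subset\mathbb{N}$ with: (1) $\mathbb{P}(E_k)\le\varepsilon$ for all $k\in\mathbb{N}$; (2) $\sup_{k\in\mathbb{N}}\frac{\log(k+1)}{\log(1/\mathbb{P}(E_k))}<\infty$; (3) for every $i\in\mathbb{N}$ there exist $j\in J$ and $\mathcal{K}\subset\mathbb{N}$ with $|\mathcal{K}|\le K$ and $\{X_i\neq X_j\}\subset\bigcup_{k\in\mathcal{K}}E_k$. Then $\Delta_n(\mu)\to0$ as $n\to\infty$.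
   Context: $\xi(i,j):=\mathbb{P}(X_i\neq X_j)$ for $i,j\in\mathbb{N}$; $(\mathbb{N},\xi)$ is totally bounded if for every $\varepsilon>0$ there is a finite $S\subset\mathbb{N}$ such that every $i$ has $s\in S$ with $\xi(i,s)\le\varepsilon$. For $n\ge1$, with $X^{(1)},\dots,X^{(n)}$ i.i.d. from $\mu$, $\Delta_n(\mu):=\mathbb{E}\sup_{j\in\mathbb{N}}\left|\frac1n\sum_{i=1}^nX^{(i)}_j-\mathbb{E}[X_j]\right|$. In (2), $\log(1/0)=\infty$. *)

theory Defs
  imports "HOL-Probability.Probability"
begin

text \<open>The measurable space \<open>{0,1}^\<nat>\<close>, with bits encoded as booleans
  (True = 1, False = 0) and the product sigma-algebra.\<close>
definition bin_seq :: "(nat \<Rightarrow> bool) measure" where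
  "bin_seq = PiM UNIV (\<lambda>_::nat. count_space (UNIV :: bool set))"

definition xi :: "'w measure \<Rightarrow> ('w \<Rightarrow> nat \<Rightarrow> bool) \<Rightarrow> nat \<Rightarrow> nat \<Rightarrow> real" where
  "xi M X i j = measure M {\<omega> \<in> space M. X \<omega> i \<noteq> X \<omega> j}"

definition totally_bounded_xi :: "'w measure \<Rightarrow> ('w \<Rightarrow> nat \<Rightarrow> bool) \<Rightarrow> bool" where
  "totally_bounded_xi M X \<longleftrightarrow>
     (\<forall>\<epsilon>>0. \<exists>S. finite S \<and> (\<forall>i. \<exists>s\<in>S. xi M X i s \<le> \<epsilon>))"

definition Delta :: "nat \<Rightarrow> (nat \<Rightarrow> bool) measure \<Rightarrow> real" where
  "Delta n \<mu> = (\<integral>x. (SUP j. \<bar>(\<Sum>i<n. of_bool (x i j)) / real n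
                      - (\<integral>y. of_bool (y j) \<partial>\<mu>)\<bar>) \<partial>(PiM {..<n} (\<lambda>_. \<mu>)))"

text \<open>The quantity \<open>log(k+1)/log(1/p)\<close> in the extended reals, with the convention
  \<open>log(1/0) = \<infinity>\<close> (so the ratio is 0 when p = 0), and \<open>c/0 = \<infinity>\<close> for c > 0.\<close>
definition log_ratio :: "nat \<Rightarrow> real \<Rightarrow> ereal" where
  "log_ratio k p = (if p = 0 then 0 else ereal (ln (real k + 1)) / ereal (ln (1 / p)))"

end

(*
  Fix a scale L and apply the hypothesis with epsilon = 4^-L. Every coordinate a is tied to some b
  in the finite set J through at most K of the events E_k, so the means of X_a and X_b differ by at
  most K 4^-L, and their empirical means over n samples by at most K times the largest frequency
  with which a single E_k is hit by the samples. Condition (2) makes P(E_k)^r <= (k+1)^-2 once r is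
  large, so a union bound over k and over the index sets shows that some E_k is hit
  m = 2 (n div L + 1) times only with probability O(2^-n); otherwise every frequency is at most
  m/n, roughly 2/L. The finitely many coordinates in J obey the L^2 law of large numbers, and
  altogether Delta_n is eventually below any bound exceeding 3K/L.
*)

theory Submission
  imports Defs "HOL-Real_Asymp.Real_Asymp"
begin

definition sample_mean :: "('w \<Rightarrow> nat \<Rightarrow> bool) \<Rightarrow> nat \<Rightarrow> (nat \<Rightarrow> 'w) \<Rightarrow> nat \<Rightarrow> real" where
  "sample_mean X n \<omega> j = (\<Sum>i<n. of_bool (X (\<omega> i) j)) / real n"

definition coord_mean :: "'w measure \<Rightarrow> ('w \<Rightarrow> nat \<Rightarrow> bool) \<Rightarrow> nat \<Rightarrow> real" where
  "coord_mean M X j = (\<integral>y. of_bool (X y j) \<partial>M)"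

lemma sample_mean_nonneg: "0 \<le> sample_mean X n \<omega> j"
  by (simp add: sample_mean_def sum_nonneg)

lemma sample_mean_le_1: "sample_mean X n \<omega> j \<le> 1"
proof -
  have "(\<Sum>i<n. of_bool (X (\<omega> i) j)) \<le> (\<Sum>i<n. 1::real)"
    by (intro sum_mono) auto
  then show ?thesis
    by (cases "n = 0") (auto simp: sample_mean_def divide_le_eq)
qed

lemma measurable_bin_seq_coord: "(\<lambda>x. x j) \<in> measurable bin_seq (count_space UNIV)"
  unfolding bin_seq_def by measurable

lemma borel_measurable_of_bool_coord:
  assumes "X \<in> measurable M bin_seq"
  shows "(\<lambda>\<omega>. of_bool (X \<omega> j) :: real) \<in> borel_measurable M"
  using measurable_compose[OF assms measurable_bin_seq_coord] by (rule measurable_compose) simp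

lemma borel_measurable_sample_mean:
  assumes "X \<in> measurable M bin_seq"
  shows "(\<lambda>\<omega>. sample_mean X n \<omega> j) \<in> borel_measurable (PiM {..<n} (\<lambda>_. M))"
proof -
  have "(\<lambda>\<omega>. of_bool (X (\<omega> i) j) :: real) \<in> borel_measurable (PiM {..<n} (\<lambda>_. M))" if "i < n" for i
    using measurable_component_singleton[of i "{..<n}" "\<lambda>_. M"] that
    by (intro measurable_compose[OF _ borel_measurable_of_bool_coord[OF assms]]) simp
  then show ?thesis
    unfolding sample_mean_def
    by (intro borel_measurable_divide borel_measurable_sum borel_measurable_const) simp_all
qed

lemma
  assumes "prob_space M" and "X \<in> measurable M bin_seq"
  shows integrable_of_bool_coord: "integrable M (\<lambda>y. of_bool (X y j) :: real)"
    and coord_mean_nonneg: "0 \<le> coord_mean M X j"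
    and coord_mean_le_1: "coord_mean M X j \<le> 1"
proof -
  interpret prob_space M by fact
  show int: "integrable M (\<lambda>y. of_bool (X y j) :: real)"
    by (rule integrable_const_bound[where B=1])
       (auto simp: borel_measurable_of_bool_coord[OF assms(2)])
  show "0 \<le> coord_mean M X j"
    unfolding coord_mean_def by (intro integral_nonneg_AE) simp
  show "coord_mean M X j \<le> 1"
    unfolding coord_mean_def by (rule integral_le_const[OF int]) simp
qed

lemma abs_sample_mean_diff_le_1:
  assumes "prob_space M" and "X \<in> measurable M bin_seq"
  shows "\<bar>sample_mean X n \<omega> j - coord_mean M X j\<bar> \<le> 1"
  using sample_mean_nonneg[of X n \<omega> j] sample_mean_le_1[of X n \<omega> j]
    coord_mean_nonneg[OF assms, of j] coord_mean_le_1[OF assms, of j] by linarith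

lemma borel_measurable_sup_frequency_deviation:
  fixes c :: "nat \<Rightarrow> real"
  assumes c: "\<And>j. 0 \<le> c j \<and> c j \<le> 1"
  shows "(\<lambda>x. SUP j. \<bar>(\<Sum>i<n. of_bool (x i j)) / real n - c j\<bar>)
    \<in> borel_measurable (PiM {..<n} (\<lambda>_. bin_seq))"
proof (rule borel_measurable_cSUP)
  fix j
  have "(\<lambda>x. x i j) \<in> measurable (PiM {..<n} (\<lambda>_. bin_seq)) (count_space UNIV)" if "i < n" for i
    using that by (intro measurable_compose[OF _ measurable_bin_seq_coord]) simp
  then show "(\<lambda>x. \<bar>(\<Sum>i<n. of_bool (x i j)) / real n - c j\<bar>)
      \<in> borel_measurable (PiM {..<n} (\<lambda>_. bin_seq))"
    by (intro borel_measurable_abs borel_measurable_diff borel_measurable_divide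
        borel_measurable_sum) (auto intro: measurable_compose)
next
  fix x :: "nat \<Rightarrow> nat \<Rightarrow> bool"
  have "\<bar>(\<Sum>i<n. of_bool (x i j)) / real n - c j\<bar> \<le> 1" for j
    using sample_mean_nonneg[of "\<lambda>y. y" n x j] sample_mean_le_1[of "\<lambda>y. y" n x j] c[of j]
    unfolding sample_mean_def by linarith
  then show "bdd_above (range (\<lambda>j. \<bar>(\<Sum>i<n. of_bool (x i j)) / real n - c j\<bar>))"
    by (intro bdd_aboveI2)
qed simp

lemma Delta_eq_integral_samples:
  assumes prob: "prob_space M" and XM: "X \<in> measurable M bin_seq" and mu: "\<mu> = distr M bin_seq X"
  shows "Delta n \<mu> = (\<integral>\<omega>. (SUP j. \<bar>sample_mean X n \<omega> j - coord_mean M X j\<bar>) \<partial>PiM {..<n} (\<lambda>_. M))"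
proof -
  let ?Q = "PiM {..<n} (\<lambda>_. \<mu>)"
  let ?F = "\<lambda>x. SUP j. \<bar>(\<Sum>i<n. of_bool (x i j)) / real n - coord_mean M X j\<bar> :: real"
  have sets_mu: "sets \<mu> = sets bin_seq"
    unfolding mu by simp
  have XM': "X \<in> measurable M \<mu>"
    by (subst measurable_cong_sets[OF refl sets_mu]) (rule XM)
  have "prob_space \<mu>"
    unfolding mu using XM prob by (auto intro: prob_space.prob_space_distr)
  moreover have "distr M \<mu> X = \<mu>"
    using distr_cong[OF refl sets_mu refl, of M X] mu by simp
  ultimately have Q_eq: "?Q = distr (PiM {..<n} (\<lambda>_. M)) ?Q (compose {..<n} X)"
    using distr_PiM_finite_prob_space'[of "{..<n}" "\<lambda>_. M" "\<lambda>_. \<mu>" X] prob XM' by simp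
  have coord_mean_mu: "(\<integral>y. of_bool (y j) \<partial>\<mu>) = coord_mean M X j" for j
    unfolding mu coord_mean_def
    by (rule integral_distr[OF XM]) (rule measurable_compose[OF measurable_bin_seq_coord], simp)
  have compose_measurable: "compose {..<n} X \<in> measurable (PiM {..<n} (\<lambda>_. M)) ?Q"
    unfolding compose_def
    by (rule measurable_restrict) (auto intro: measurable_compose[OF _ XM'])
  have "sets ?Q = sets (PiM {..<n} (\<lambda>_. bin_seq))"
    by (rule sets_PiM_cong) (auto simp: sets_mu)
  then have F_measurable: "?F \<in> borel_measurable ?Q"
    using borel_measurable_sup_frequency_deviation[of "coord_mean M X" n]
      coord_mean_nonneg[OF prob XM] coord_mean_le_1[OF prob XM]
    by (subst measurable_cong_sets[of ?Q "PiM {..<n} (\<lambda>_. bin_seq)"]) simp_all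
  have "Delta n \<mu> = (\<integral>x. ?F x \<partial>?Q)"
    unfolding Delta_def coord_mean_mu ..
  also have "\<dots> = (\<integral>\<omega>. ?F (compose {..<n} X \<omega>) \<partial>PiM {..<n} (\<lambda>_. M))"
    by (subst Q_eq) (rule integral_distr[OF compose_measurable F_measurable])
  also have "\<dots> = (\<integral>\<omega>. (SUP j. \<bar>sample_mean X n \<omega> j - coord_mean M X j\<bar>) \<partial>PiM {..<n} (\<lambda>_. M))"
    by (intro Bochner_Integration.integral_cong refl SUP_cong)
       (simp add: compose_def sample_mean_def)
  finally show ?thesis .
qed

lemma Delta_nonneg:
  assumes "prob_space M" and "X \<in> measurable M bin_seq" and "\<mu> = distr M bin_seq X"
  shows "0 \<le> Delta n \<mu>"
  unfolding Delta_eq_integral_samples[OF assms]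
proof (intro integral_nonneg_AE AE_I2)
  fix \<omega> :: "nat \<Rightarrow> 'a"
  have "bdd_above (range (\<lambda>j. \<bar>sample_mean X n \<omega> j - coord_mean M X j\<bar>))"
    using abs_sample_mean_diff_le_1[OF assms(1,2)] by (intro bdd_aboveI2)
  then show "0 \<le> (SUP j. \<bar>sample_mean X n \<omega> j - coord_mean M X j\<bar>)"
    by (rule cSUP_upper2[of _ _ 0]) auto
qed

lemma integral_PiM_centered_product_eq_0:
  fixes g :: "'a \<Rightarrow> real" and i l n :: nat
  assumes prob: "prob_space M" and g: "integrable M g"
    and il: "i < n" "l < n" "i \<noteq> l"
  shows "(\<integral>\<omega>. (g (\<omega> i) - integral\<^sup>L M g) * (g (\<omega> l) - integral\<^sup>L M g) \<partial>PiM {..<n} (\<lambda>_. M)) = 0"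
proof -
  interpret prob_space M by fact
  interpret product_prob_space "\<lambda>_::nat. M" by (rule product_prob_spaceI) (rule prob)
  define f where "f k = (if k = i \<or> k = l then (\<lambda>x. g x - integral\<^sup>L M g) else (\<lambda>_. 1))" for k
  have "(g (\<omega> i) - integral\<^sup>L M g) * (g (\<omega> l) - integral\<^sup>L M g) = (\<Prod>k<n. f k (\<omega> k))" for \<omega>
  proof -
    have "(\<Prod>k<n. f k (\<omega> k)) = (\<Prod>k\<in>{i, l}. f k (\<omega> k))"
      using il by (intro prod.mono_neutral_right) (auto simp: f_def)
    then show ?thesis
      using il by (simp add: f_def)
  qed
  moreover have "(\<integral>\<omega>. (\<Prod>k<n. f k (\<omega> k)) \<partial>PiM {..<n} (\<lambda>_. M)) = (\<Prod>k<n. integral\<^sup>L M (f k))"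
    by (rule product_integral_prod) (use g in \<open>auto simp: f_def\<close>)
  moreover have "integral\<^sup>L M (f i) = 0"
    using g by (simp add: f_def prob_space.prob_space[OF prob])
  ultimately show ?thesis
    using il by (auto intro!: bexI[of _ i])
qed

lemma abs_diff_integral_le_1:
  fixes g :: "'a \<Rightarrow> real"
  assumes "prob_space M" and "g \<in> borel_measurable M"
    and g01: "\<And>x. x \<in> space M \<Longrightarrow> 0 \<le> g x \<and> g x \<le> 1" and "x \<in> space M"
  shows "\<bar>g x - integral\<^sup>L M g\<bar> \<le> 1"
proof -
  interpret prob_space M by fact
  have "integrable M g"
    by (rule integrable_const_bound[where B=1]) (auto simp: assms)
  then have "0 \<le> integral\<^sup>L M g" "integral\<^sup>L M g \<le> 1"
    using g01 by (auto intro!: integral_nonneg_AE integral_le_const)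
  then show ?thesis
    using g01[OF \<open>x \<in> space M\<close>] by linarith
qed

lemma integral_PiM_square_centered_sum_le:
  fixes g :: "'a \<Rightarrow> real"
  assumes prob: "prob_space M" and gm: "g \<in> borel_measurable M"
    and g01: "\<And>x. x \<in> space M \<Longrightarrow> 0 \<le> g x \<and> g x \<le> 1"
  shows "(\<integral>\<omega>. (\<Sum>i<n. g (\<omega> i) - integral\<^sup>L M g)\<^sup>2 \<partial>PiM {..<n} (\<lambda>_. M)) \<le> real n"
proof -
  interpret prob_space M by fact
  interpret Q: prob_space "PiM {..<n} (\<lambda>_. M)" by (rule prob_space_PiM) (rule prob)
  let ?Q = "PiM {..<n} (\<lambda>_. M)"
  define h where "h i \<omega> = g (\<omega> i) - integral\<^sup>L M g" for i and \<omega> :: "nat \<Rightarrow> 'a"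
  have h_le_1: "\<bar>h i \<omega>\<bar> \<le> 1" if "\<omega> \<in> space ?Q" "i < n" for i \<omega>
    using that unfolding h_def
    by (intro abs_diff_integral_le_1[OF prob gm g01]) (auto simp: space_PiM PiE_iff)
  have hh_int: "integrable ?Q (\<lambda>\<omega>. h i \<omega> * h l \<omega>)" if "i < n" "l < n" for i l
  proof (rule Q.integrable_const_bound[where B=1])
    show "AE \<omega> in ?Q. norm (h i \<omega> * h l \<omega>) \<le> 1"
      using h_le_1 that by (auto simp: abs_mult intro!: mult_le_one)
    have "(\<lambda>\<omega>. \<omega> k) \<in> measurable ?Q M" if "k < n" for k
      using that by (intro measurable_component_singleton) simp
    then show "(\<lambda>\<omega>. h i \<omega> * h l \<omega>) \<in> borel_measurable ?Q"
      unfolding h_def using that gm by (auto intro!: borel_measurable_times borel_measurable_diff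
        measurable_compose[of _ ?Q M g borel])
  qed
  have g: "integrable M g"
    by (rule integrable_const_bound[where B=1]) (auto simp: gm g01)
  have "(\<integral>\<omega>. (\<Sum>i<n. h i \<omega>)\<^sup>2 \<partial>?Q) = (\<integral>\<omega>. (\<Sum>i<n. \<Sum>l<n. h i \<omega> * h l \<omega>) \<partial>?Q)"
    unfolding power2_eq_square sum_product ..
  also have "\<dots> = (\<Sum>i<n. \<integral>\<omega>. (\<Sum>l<n. h i \<omega> * h l \<omega>) \<partial>?Q)"
    by (intro Bochner_Integration.integral_sum Bochner_Integration.integrable_sum hh_int) simp_all
  also have "\<dots> = (\<Sum>i<n. \<Sum>l<n. \<integral>\<omega>. h i \<omega> * h l \<omega> \<partial>?Q)"
    by (intro sum.cong refl Bochner_Integration.integral_sum hh_int) simp_all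
  also have "\<dots> = (\<Sum>i<n. \<integral>\<omega>. h i \<omega> * h i \<omega> \<partial>?Q)"
  proof (intro sum.cong refl)
    fix i assume "i \<in> {..<n}"
    then show "(\<Sum>l<n. \<integral>\<omega>. h i \<omega> * h l \<omega> \<partial>?Q) = (\<integral>\<omega>. h i \<omega> * h i \<omega> \<partial>?Q)"
      using integral_PiM_centered_product_eq_0[OF prob g, of i n]
      by (subst sum.remove[of _ i]) (auto simp: h_def intro!: sum.neutral)
  qed
  also have "\<dots> \<le> (\<Sum>i<n. 1)"
  proof (intro sum_mono Q.integral_le_const hh_int AE_I2)
    fix i \<omega> assume "i \<in> {..<n}" "\<omega> \<in> space ?Q"
    then show "h i \<omega> * h i \<omega> \<le> 1"
      using h_le_1 by (metis abs_mult_self_eq lessThan_iff mult_le_one abs_ge_zero)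
  qed auto
  finally show ?thesis
    by (simp add: h_def sum_subtractf)
qed

lemma abs_le_add_square_div:
  fixes z d :: real
  assumes "d > 0"
  shows "\<bar>z\<bar> \<le> d + z\<^sup>2 / d"
proof (cases "\<bar>z\<bar> \<le> d")
  case True
  then show ?thesis
    using assms by (simp add: add_increasing2)
next
  case False
  then have "\<bar>z\<bar> * d \<le> \<bar>z\<bar> * \<bar>z\<bar>"
    by (intro mult_left_mono) auto
  then show ?thesis
    using assms by (simp add: le_divide_eq power2_eq_square add_increasing)
qed

lemma integral_PiM_abs_sample_average_deviation_le:
  fixes g :: "'a \<Rightarrow> real"
  assumes prob: "prob_space M" and gm: "g \<in> borel_measurable M"
    and g01: "\<And>x. x \<in> space M \<Longrightarrow> 0 \<le> g x \<and> g x \<le> 1" and n: "n > 0"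
  shows "(\<integral>\<omega>. \<bar>(\<Sum>i<n. g (\<omega> i)) / real n - integral\<^sup>L M g\<bar> \<partial>PiM {..<n} (\<lambda>_. M)) \<le> 2 / sqrt n"
proof -
  interpret Q: prob_space "PiM {..<n} (\<lambda>_. M)" by (rule prob_space_PiM) (rule prob)
  let ?Q = "PiM {..<n} (\<lambda>_. M)"
  define Z where "Z \<omega> = (\<Sum>i<n. g (\<omega> i) - integral\<^sup>L M g)" for \<omega>
  \<comment> \<open>\<open>\<bar>Y\<bar> \<le> d + Y\<^sup>2 / d\<close> with this d turns \<open>E Z\<^sup>2 \<le> n\<close> into the first-moment bound.\<close>
  define d where "d = 1 / sqrt n"
  have d: "d > 0"
    using n by (simp add: d_def)
  have Z_le: "\<bar>Z \<omega>\<bar> \<le> n" if "\<omega> \<in> space ?Q" for \<omega>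
  proof -
    have "\<bar>Z \<omega>\<bar> \<le> (\<Sum>i<n. 1)"
      unfolding Z_def using that
      by (intro order_trans[OF sum_abs sum_mono] abs_diff_integral_le_1[OF prob gm g01])
         (auto simp: space_PiM PiE_iff)
    then show ?thesis
      by simp
  qed
  have square_int: "integrable ?Q (\<lambda>\<omega>. (Z \<omega>)\<^sup>2)"
  proof (rule Q.integrable_const_bound[where B="(real n)\<^sup>2"])
    show "AE \<omega> in ?Q. norm ((Z \<omega>)\<^sup>2) \<le> (real n)\<^sup>2"
      using Z_le by (auto simp: abs_le_square_iff[symmetric])
    have "Z \<in> borel_measurable ?Q"
      unfolding Z_def using gm by (auto intro!: borel_measurable_sum borel_measurable_diff
        measurable_compose[OF measurable_component_singleton])
    then show "(\<lambda>\<omega>. (Z \<omega>)\<^sup>2) \<in> borel_measurable ?Q"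
      by simp
  qed
  have "(\<integral>\<omega>. \<bar>Z \<omega> / n\<bar> \<partial>?Q) \<le> (\<integral>\<omega>. d + (Z \<omega> / n)\<^sup>2 / d \<partial>?Q)"
    using square_int abs_le_add_square_div[OF d, of "Z _ / n"] d
    by (intro integral_mono') (auto simp: power_divide)
  also have "\<dots> = d + (\<integral>\<omega>. (Z \<omega>)\<^sup>2 \<partial>?Q) / n\<^sup>2 / d"
    using square_int by (simp add: Q.prob_space power_divide)
  also have "\<dots> \<le> d + n / n\<^sup>2 / d"
    using integral_PiM_square_centered_sum_le[OF prob gm g01, of n] d
    by (simp add: Z_def divide_right_mono)
  also have "\<dots> = 2 / sqrt n"
    using n by (simp add: d_def power2_eq_square field_simps real_sqrt_mult[symmetric])
  finally show ?thesis
    using n by (simp add: Z_def sum_subtractf diff_divide_distrib)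
qed

definition repeated_hits :: "'a measure \<Rightarrow> nat \<Rightarrow> nat \<Rightarrow> (nat \<Rightarrow> 'a set) \<Rightarrow> (nat \<Rightarrow> 'a) set" where
  "repeated_hits M n m E =
     (\<Union>k. \<Union>S\<in>{S. S \<subseteq> {..<n} \<and> card S = m}. PiE {..<n} (\<lambda>i. if i \<in> S then E k else space M))"

lemma finite_subsets_card_lessThan: "finite {S. S \<subseteq> {..<n::nat} \<and> card S = m}"
  by (rule finite_subset[of _ "Pow {..<n}"]) auto

lemma sets_repeated_hits:
  assumes "\<And>k. E k \<in> sets M"
  shows "repeated_hits M n m E \<in> sets (PiM {..<n} (\<lambda>_. M))"
proof -
  have "(\<Union>S\<in>{S. S \<subseteq> {..<n} \<and> card S = m}. PiE {..<n} (\<lambda>i. if i \<in> S then E k else space M))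
      \<in> sets (PiM {..<n} (\<lambda>_. M))" for k
    using finite_subsets_card_lessThan
    by (intro sets.finite_UN sets_PiM_I_finite) (auto simp: assms)
  then show ?thesis
    unfolding repeated_hits_def by (intro sets.countable_UN) auto
qed

lemma card_hits_less_if_notin_repeated_hits:
  assumes "\<omega> \<in> space (PiM {..<n} (\<lambda>_. M))" and "\<omega> \<notin> repeated_hits M n m E"
  shows "card {i. i < n \<and> \<omega> i \<in> E k} < m"
proof (rule ccontr)
  assume "\<not> card {i. i < n \<and> \<omega> i \<in> E k} < m"
  then have "m \<le> card {i. i < n \<and> \<omega> i \<in> E k}"
    by simp
  then obtain S where S: "S \<subseteq> {i. i < n \<and> \<omega> i \<in> E k}" "card S = m" "finite S"
    by (rule obtain_subset_with_card_n)
  then have "\<omega> \<in> PiE {..<n} (\<lambda>i. if i \<in> S then E k else space M)"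
    using assms(1) by (auto simp: space_PiM PiE_iff)
  then show False
    using assms(2) S unfolding repeated_hits_def by blast
qed

lemma measure_PiM_cylinder:
  fixes n :: nat
  assumes "prob_space M" and "A \<in> sets M" and "S \<subseteq> {..<n}"
  shows "measure (PiM {..<n} (\<lambda>_. M)) (PiE {..<n} (\<lambda>i. if i \<in> S then A else space M))
    = measure M A ^ card S"
proof -
  interpret prob_space M by fact
  interpret PP: product_prob_space "\<lambda>_::nat. M" by (rule product_prob_spaceI) fact
  have "emeasure (PiM {..<n} (\<lambda>_. M)) (PiE {..<n} (\<lambda>i. if i \<in> S then A else space M))
      = (\<Prod>i<n. emeasure M (if i \<in> S then A else space M))"
    by (rule PP.emeasure_PiM) (auto simp: assms(2))
  also have "\<dots> = (\<Prod>i<n. ennreal (if i \<in> S then measure M A else 1))"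
    by (intro prod.cong refl) (auto simp: emeasure_eq_measure prob_space)
  also have "\<dots> = ennreal (\<Prod>i<n. if i \<in> S then measure M A else 1)"
    by (rule prod_ennreal) auto
  also have "(\<Prod>i<n. if i \<in> S then measure M A else 1) = (\<Prod>i\<in>{..<n} \<inter> S. measure M A)"
    by (rule prod.inter_restrict[symmetric]) simp
  also have "\<dots> = measure M A ^ card S"
    using assms(3) by (simp add: Int_absorb1)
  finally show ?thesis
    by (simp add: measure_def)
qed

lemma measure_repeated_hits_le:
  assumes prob: "prob_space M" and E: "\<And>k. E k \<in> sets M"
    and summable: "summable (\<lambda>k. measure M (E k) ^ m)"
  shows "measure (PiM {..<n} (\<lambda>_. M)) (repeated_hits M n m E) \<le> 2 ^ n * (\<Sum>k. measure M (E k) ^ m)"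
proof -
  interpret Q: prob_space "PiM {..<n} (\<lambda>_. M)" by (rule prob_space_PiM) (rule prob)
  let ?Q = "PiM {..<n} (\<lambda>_. M)"
  let ?Ss = "{S. S \<subseteq> {..<n} \<and> card S = m}"
  define H where "H k = (\<Union>S\<in>?Ss. PiE {..<n} (\<lambda>i. if i \<in> S then E k else space M))" for k
  have H_sets: "H k \<in> sets ?Q" for k
    unfolding H_def using finite_subsets_card_lessThan by (intro sets.finite_UN sets_PiM_I_finite) (auto simp: E)
  have H_le: "measure ?Q (H k) \<le> 2 ^ n * measure M (E k) ^ m" for k
  proof -
    have "measure ?Q (H k) \<le> (\<Sum>S\<in>?Ss. measure ?Q (PiE {..<n} (\<lambda>i. if i \<in> S then E k else space M)))"
      unfolding H_def using finite_subsets_card_lessThan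
      by (intro measure_UNION_le sets_PiM_I_finite) (auto simp: E)
    also have "\<dots> = real (card ?Ss) * measure M (E k) ^ m"
      by (simp add: measure_PiM_cylinder[OF prob E])
    also have "\<dots> \<le> real (card (Pow {..<n})) * measure M (E k) ^ m"
      by (intro mult_right_mono of_nat_mono card_mono) auto
    finally show ?thesis
      by (simp add: card_Pow)
  qed
  have summable_H: "summable (\<lambda>k. measure ?Q (H k))"
    using H_le by (intro summable_comparison_test'[OF summable_mult[OF summable, of "2 ^ n"]]) simp
  have "measure ?Q (repeated_hits M n m E) \<le> (\<Sum>k. measure ?Q (H k))"
    unfolding repeated_hits_def H_def[symmetric]
    using H_sets summable_H by (intro Q.finite_measure_subadditive_countably) auto
  also have "\<dots> \<le> (\<Sum>k. 2 ^ n * measure M (E k) ^ m)"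
    using H_le summable_H summable by (intro suminf_le summable_mult) auto
  finally show ?thesis
    using suminf_mult[OF summable] by simp
qed

lemma power_le_inverse_square_if_log_ratio_le:
  fixes p :: real and B r k :: nat
  assumes "0 \<le> p" and "p < 1" and "log_ratio k p \<le> real B"
    and "2 * B \<le> r" and "1 \<le> r"
  shows "p ^ r \<le> 1 / (real k + 1)\<^sup>2"
proof (cases "p = 0")
  case True
  then show ?thesis
    using assms(5) by (simp add: power_0_left)
next
  case False
  then have p: "0 < p"
    using assms(1) by simp
  have ln_pos: "0 < ln (1 / p)"
    using p assms(2) by (simp add: ln_div)
  have "ln (real k + 1) / ln (1 / p) \<le> real B"
    using assms(3) ln_pos False by (simp add: log_ratio_def)
  then have "ln (real k + 1) \<le> real B * ln (1 / p)"
    using ln_pos by (simp add: divide_le_eq)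
  then have "ln (real k + 1) \<le> - real B * ln p"
    using p by (simp add: ln_div)
  have "ln (p ^ r) = real r * ln p"
    using p by (simp add: ln_realpow)
  also have "\<dots> \<le> real (2 * B) * ln p"
    using assms(2,4) p by (intro mult_right_mono_neg) auto
  also have "\<dots> \<le> ln (1 / (real k + 1)\<^sup>2)"
    using \<open>ln (real k + 1) \<le> - real B * ln p\<close> by (simp add: ln_div ln_realpow)
  finally show ?thesis
    using p by simp
qed

lemma summable_inverse_square_Suc: "summable (\<lambda>k. 1 / (real k + 1)\<^sup>2)"
proof -
  have "summable (\<lambda>k. inverse (real (Suc k) ^ 2))"
    using inverse_power_summable[of 2, where 'a=real] by (subst summable_Suc_iff) simp
  then show ?thesis
    by (simp add: inverse_eq_divide add.commute)
qed

lemma measure_repeated_hits_le_half_power: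
  fixes B L n :: nat
  assumes "prob_space M" and E: "\<And>k. E k \<in> sets M"
    and small: "\<And>k. measure M (E k) \<le> (1/4) ^ L" and L: "1 \<le> L"
    and log_ratio: "\<And>k. log_ratio k (measure M (E k)) \<le> real B" and n: "2 * B * L \<le> n"
  shows "measure (PiM {..<n} (\<lambda>_. M)) (repeated_hits M n (2 * (n div L + 1)) E)
    \<le> (1/2) ^ n * (\<Sum>k. 1 / (real k + 1)\<^sup>2)"
proof -
  define r where "r = n div L + 1"
  \<comment> \<open>Half of the exponent 2 r gives \<open>(4^-L)^r \<le> 4^-n\<close>, beating the \<open>2^n\<close> index sets;
    the other half makes the series over k converge.\<close>
  have r_ge: "2 * B \<le> r"
    using div_le_mono[OF n, of L] L by (simp add: r_def)
  have "n \<le> L * r"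
  proof -
    have "L * r = n div L * L + L"
      by (simp add: r_def algebra_simps)
    then show ?thesis
      using div_mult_mod_eq[of n L] mod_less_divisor[of L n] L by linarith
  qed
  then have small_r: "((1/4) ^ L) ^ r \<le> ((1/4) ^ n :: real)"
    by (simp add: power_mult[symmetric] power_decreasing)
  have p_le: "measure M (E k) ^ (2 * r) \<le> (1/4) ^ n * (1 / (real k + 1)\<^sup>2)" for k
  proof -
    have p: "0 \<le> measure M (E k)" "measure M (E k) < 1"
      using small[of k] L by (auto intro: le_less_trans simp: power_less_one_iff)
    have "measure M (E k) ^ (2 * r) = measure M (E k) ^ r * measure M (E k) ^ r"
      by (simp add: mult_2 power_add)
    also have "\<dots> \<le> ((1/4) ^ L) ^ r * (1 / (real k + 1)\<^sup>2)"
      using p small r_ge log_ratio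
      by (intro mult_mono power_mono power_le_inverse_square_if_log_ratio_le) (auto simp: r_def)
    also have "\<dots> \<le> (1/4) ^ n * (1 / (real k + 1)\<^sup>2)"
      using small_r by (rule mult_right_mono) simp
    finally show ?thesis .
  qed
  have summable: "summable (\<lambda>k. measure M (E k) ^ (2 * r))"
    using p_le by (intro summable_comparison_test'[OF summable_mult[OF summable_inverse_square_Suc, of "(1/4) ^ n"]]) simp
  have "(\<Sum>k. measure M (E k) ^ (2 * r)) \<le> (\<Sum>k. (1/4) ^ n * (1 / (real k + 1)\<^sup>2))"
    by (intro suminf_le p_le summable summable_mult summable_inverse_square_Suc)
  also have "\<dots> = (1/4) ^ n * (\<Sum>k. 1 / (real k + 1)\<^sup>2)"
    by (rule suminf_mult[OF summable_inverse_square_Suc])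
  finally have sum_le: "(\<Sum>k. measure M (E k) ^ (2 * r)) \<le> (1/4) ^ n * (\<Sum>k. 1 / (real k + 1)\<^sup>2)" .
  have "measure (PiM {..<n} (\<lambda>_. M)) (repeated_hits M n (2 * r) E) \<le> 2 ^ n * (\<Sum>k. measure M (E k) ^ (2 * r))"
    by (rule measure_repeated_hits_le[OF assms(1) E summable])
  also have "\<dots> \<le> 2 ^ n * ((1/4) ^ n * (\<Sum>k. 1 / (real k + 1)\<^sup>2))"
    using sum_le by (rule mult_left_mono) simp
  also have "\<dots> = (1/2) ^ n * (\<Sum>k. 1 / (real k + 1)\<^sup>2)"
    by (simp add: power_mult_distrib[symmetric] mult.assoc[symmetric])
  finally show ?thesis
    by (simp add: r_def)
qed

lemma abs_of_bool_diff_le_sum_indicator: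
  assumes cover: "{\<omega> \<in> space M. X \<omega> a \<noteq> X \<omega> b} \<subseteq> (\<Union>k\<in>Ka. E k)"
    and "finite Ka" and "y \<in> space M"
  shows "\<bar>of_bool (X y a) - of_bool (X y b)\<bar> \<le> (\<Sum>k\<in>Ka. indicator (E k) y :: real)"
proof (cases "X y a = X y b")
  case True
  then show ?thesis
    by (simp add: sum_nonneg)
next
  case False
  then obtain k where k: "k \<in> Ka" "y \<in> E k"
    using cover \<open>y \<in> space M\<close> by blast
  then have "1 \<le> (\<Sum>k\<in>Ka. indicator (E k) y :: real)"
    using member_le_sum[of k Ka "\<lambda>k. indicator (E k) y :: real"] \<open>finite Ka\<close> by simp
  then show ?thesis
    by (cases "X y a") auto
qed

lemma abs_coord_mean_diff_le:
  assumes prob: "prob_space M" and XM: "X \<in> measurable M bin_seq"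
    and cover: "{\<omega> \<in> space M. X \<omega> a \<noteq> X \<omega> b} \<subseteq> (\<Union>k\<in>Ka. E k)"
    and Ka: "finite Ka" and E: "\<And>k. E k \<in> sets M"
  shows "\<bar>coord_mean M X a - coord_mean M X b\<bar> \<le> (\<Sum>k\<in>Ka. measure M (E k))"
proof -
  interpret prob_space M by fact
  have int: "integrable M (\<lambda>y. of_bool (X y j) :: real)" for j
    by (rule integrable_of_bool_coord[OF prob XM])
  have "\<bar>coord_mean M X a - coord_mean M X b\<bar> = \<bar>\<integral>y. of_bool (X y a) - of_bool (X y b) \<partial>M\<bar>"
    using int by (simp add: coord_mean_def)
  also have "\<dots> \<le> (\<integral>y. \<bar>of_bool (X y a) - of_bool (X y b)\<bar> \<partial>M)"
    by (rule integral_abs_bound)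
  also have "\<dots> \<le> (\<integral>y. (\<Sum>k\<in>Ka. indicator (E k) y) \<partial>M)"
    using int E abs_of_bool_diff_le_sum_indicator[OF cover Ka]
    by (intro integral_mono) (auto simp: emeasure_eq_measure)
  also have "\<dots> = (\<Sum>k\<in>Ka. measure M (E k))"
    using E by (simp add: emeasure_eq_measure)
  finally show ?thesis .
qed

lemma abs_sample_mean_diff_le:
  assumes cover: "{\<omega> \<in> space M. X \<omega> a \<noteq> X \<omega> b} \<subseteq> (\<Union>k\<in>Ka. E k)"
    and Ka: "finite Ka" and \<omega>: "\<And>i. i < n \<Longrightarrow> \<omega> i \<in> space M"
  shows "\<bar>sample_mean X n \<omega> a - sample_mean X n \<omega> b\<bar>
    \<le> (\<Sum>k\<in>Ka. real (card {i. i < n \<and> \<omega> i \<in> E k}) / n)"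
proof -
  have "\<bar>sample_mean X n \<omega> a - sample_mean X n \<omega> b\<bar>
      = \<bar>\<Sum>i<n. of_bool (X (\<omega> i) a) - of_bool (X (\<omega> i) b)\<bar> / n"
    by (simp add: sample_mean_def sum_subtractf diff_divide_distrib[symmetric])
  also have "\<dots> \<le> (\<Sum>i<n. \<Sum>k\<in>Ka. indicator (E k) (\<omega> i)) / n"
    using abs_of_bool_diff_le_sum_indicator[OF cover Ka \<omega>]
    by (intro divide_right_mono order_trans[OF sum_abs sum_mono]) auto
  also have "\<dots> = (\<Sum>k\<in>Ka. real (card {i. i < n \<and> \<omega> i \<in> E k}) / n)"
    by (subst sum.swap) (simp add: sum_divide_distrib indicator_def Collect_conj_eq lessThan_def)
  finally show ?thesis .
qed

lemma hit_frequency_le: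
  assumes "\<omega> \<in> space (PiM {..<n} (\<lambda>_. M))" and "n > 0"
  shows "real (card {i. i < n \<and> \<omega> i \<in> E k}) / n \<le> real m / n + indicator (repeated_hits M n m E) \<omega>"
proof (cases "\<omega> \<in> repeated_hits M n m E")
  case True
  have "card {i. i < n \<and> \<omega> i \<in> E k} \<le> n"
    using card_mono[of "{..<n}" "{i. i < n \<and> \<omega> i \<in> E k}"] by auto
  then have "real (card {i. i < n \<and> \<omega> i \<in> E k}) / n \<le> 1"
    using \<open>n > 0\<close> by (simp add: divide_le_eq)
  moreover have "0 \<le> real m / n" and "indicator (repeated_hits M n m E) \<omega> = (1::real)"
    using True by simp_all
  ultimately show ?thesis
    by linarith
next
  case False
  then show ?thesis
    using card_hits_less_if_notin_repeated_hits[OF assms(1) False, of k]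
    by (simp add: divide_right_mono)
qed

lemma abs_sample_deviation_le_cover:
  fixes K :: nat and \<epsilon> :: real
  assumes prob: "prob_space M" and XM: "X \<in> measurable M bin_seq" and "finite J"
    and E: "\<And>k. E k \<in> sets M" and small: "\<And>k. measure M (E k) \<le> \<epsilon>"
    and cover: "\<exists>b\<in>J. \<exists>Ka. finite Ka \<and> card Ka \<le> K \<and>
                   {\<omega> \<in> space M. X \<omega> a \<noteq> X \<omega> b} \<subseteq> (\<Union>k\<in>Ka. E k)"
    and \<omega>: "\<omega> \<in> space (PiM {..<n} (\<lambda>_. M))" and "n > 0"
  shows "\<bar>sample_mean X n \<omega> a - coord_mean M X a\<bar>
    \<le> (\<Sum>b\<in>J. \<bar>sample_mean X n \<omega> b - coord_mean M X b\<bar>)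
       + real K * (real m / n + indicator (repeated_hits M n m E) \<omega>) + real K * \<epsilon>"
proof -
  obtain b Ka where b: "b \<in> J" and Ka: "finite Ka" "card Ka \<le> K"
    and cover_b: "{\<omega> \<in> space M. X \<omega> a \<noteq> X \<omega> b} \<subseteq> (\<Union>k\<in>Ka. E k)"
    using cover by blast
  have \<omega>_space: "\<omega> i \<in> space M" if "i < n" for i
    using \<omega> that by (auto simp: space_PiM PiE_iff)
  have "\<bar>sample_mean X n \<omega> a - sample_mean X n \<omega> b\<bar>
      \<le> (\<Sum>k\<in>Ka. real m / n + indicator (repeated_hits M n m E) \<omega>)"
    using abs_sample_mean_diff_le[OF cover_b Ka(1) \<omega>_space] hit_frequency_le[OF \<omega> \<open>n > 0\<close>]
    by (meson order_trans sum_mono)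
  also have "\<dots> \<le> real K * (real m / n + indicator (repeated_hits M n m E) \<omega>)"
    using Ka(2) by (simp add: mult_right_mono)
  finally have sample: "\<bar>sample_mean X n \<omega> a - sample_mean X n \<omega> b\<bar>
      \<le> real K * (real m / n + indicator (repeated_hits M n m E) \<omega>)" .
  have "\<bar>coord_mean M X a - coord_mean M X b\<bar> \<le> (\<Sum>k\<in>Ka. \<epsilon>)"
    using abs_coord_mean_diff_le[OF prob XM cover_b Ka(1) E] small
    by (meson order_trans sum_mono)
  also have "\<dots> \<le> real K * \<epsilon>"
  proof -
    have "0 \<le> \<epsilon>"
      using small[of 0] measure_nonneg[of M "E 0"] by linarith
    then show ?thesis
      using Ka(2) by (simp add: mult_right_mono)
  qed
  finally have coord: "\<bar>coord_mean M X a - coord_mean M X b\<bar> \<le> real K * \<epsilon>" .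
  have "\<bar>sample_mean X n \<omega> b - coord_mean M X b\<bar> \<le> (\<Sum>b\<in>J. \<bar>sample_mean X n \<omega> b - coord_mean M X b\<bar>)"
    using b \<open>finite J\<close> by (intro member_le_sum) auto
  then show ?thesis
    using sample coord by linarith
qed

lemma Delta_le_cover_bound:
  fixes K m n :: nat and \<epsilon> :: real
  assumes prob: "prob_space M" and XM: "X \<in> measurable M bin_seq" and mu: "\<mu> = distr M bin_seq X"
    and J: "finite J" and E: "\<And>k. E k \<in> sets M" and small: "\<And>k. measure M (E k) \<le> \<epsilon>"
    and cover: "\<And>a. \<exists>b\<in>J. \<exists>Ka. finite Ka \<and> card Ka \<le> K \<and>
                   {\<omega> \<in> space M. X \<omega> a \<noteq> X \<omega> b} \<subseteq> (\<Union>k\<in>Ka. E k)"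
    and n: "n > 0"
  shows "Delta n \<mu> \<le> card J * (2 / sqrt n)
    + K * (real m / n + measure (PiM {..<n} (\<lambda>_. M)) (repeated_hits M n m E)) + K * \<epsilon>"
proof -
  interpret Q: prob_space "PiM {..<n} (\<lambda>_. M)" by (rule prob_space_PiM) (rule prob)
  let ?Q = "PiM {..<n} (\<lambda>_. M)" and ?R = "repeated_hits M n m E"
  define dev where "dev b \<omega> = \<bar>sample_mean X n \<omega> b - coord_mean M X b\<bar>" for b \<omega>
  define G where "G \<omega> = (\<Sum>b\<in>J. dev b \<omega>) + K * (real m / n + indicator ?R \<omega>) + K * \<epsilon>" for \<omega>
  have dev_int: "integrable ?Q (dev b)" for b
  proof (rule Q.integrable_const_bound[where B=1])
    show "AE \<omega> in ?Q. norm (dev b \<omega>) \<le> 1"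
      using abs_sample_mean_diff_le_1[OF prob XM] by (simp add: dev_def)
    show "dev b \<in> borel_measurable ?Q"
      unfolding dev_def
      by (intro borel_measurable_abs borel_measurable_diff borel_measurable_sample_mean[OF XM]
        borel_measurable_const)
  qed
  have dev_le: "(\<integral>\<omega>. dev b \<omega> \<partial>?Q) \<le> 2 / sqrt n" for b
    using integral_PiM_abs_sample_average_deviation_le[OF prob borel_measurable_of_bool_coord[OF XM] _ n]
    by (simp add: dev_def sample_mean_def coord_mean_def)
  have R: "?R \<in> sets ?Q"
    by (rule sets_repeated_hits[OF E])
  have "Delta n \<mu> = (\<integral>\<omega>. (SUP j. dev j \<omega>) \<partial>?Q)"
    unfolding Delta_eq_integral_samples[OF prob XM mu] dev_def ..
  also have "\<dots> \<le> (\<integral>\<omega>. G \<omega> \<partial>?Q)"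
  proof (rule integral_mono')
    show "integrable ?Q G"
      unfolding G_def using dev_int R by (auto simp: Q.emeasure_eq_measure)
    fix \<omega> assume \<omega>: "\<omega> \<in> space ?Q"
    have dev_le_G: "dev a \<omega> \<le> G \<omega>" for a
      unfolding dev_def G_def
      by (rule abs_sample_deviation_le_cover[OF prob XM J E small cover \<omega> n])
    then show "(SUP j. dev j \<omega>) \<le> G \<omega>"
      by (rule cSUP_least[OF UNIV_not_empty])
    show "0 \<le> G \<omega>"
      using dev_le_G[of 0] by (simp add: dev_def)
  qed
  also have "\<dots> = (\<Sum>b\<in>J. \<integral>\<omega>. dev b \<omega> \<partial>?Q) + K * (real m / n + measure ?Q ?R) + K * \<epsilon>"
    unfolding G_def using dev_int R by (simp add: Q.emeasure_eq_measure Q.prob_space)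
  also have "\<dots> \<le> card J * (2 / sqrt n) + K * (real m / n + measure ?Q ?R) + K * \<epsilon>"
    using sum_mono[of J "\<lambda>b. \<integral>\<omega>. dev b \<omega> \<partial>?Q" "\<lambda>_. 2 / sqrt n"] dev_le by simp
  finally show ?thesis .
qed

lemma Delta_le_scale_bound:
  fixes B K L n :: nat
  assumes prob: "prob_space M" and XM: "X \<in> measurable M bin_seq" and mu: "\<mu> = distr M bin_seq X"
    and J: "finite J" and E: "\<And>k. E k \<in> sets M" and small: "\<And>k. measure M (E k) \<le> (1/4) ^ L"
    and B: "\<And>k. log_ratio k (measure M (E k)) \<le> real B"
    and cover: "\<And>a. \<exists>b\<in>J. \<exists>Ka. finite Ka \<and> card Ka \<le> K \<and>
                   {\<omega> \<in> space M. X \<omega> a \<noteq> X \<omega> b} \<subseteq> (\<Union>k\<in>Ka. E k)"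
    and L: "1 \<le> L" and n: "2 * B * L < n"
  shows "Delta n \<mu> \<le> card J * (2 / sqrt n)
    + K * ((2 / L + 2 / n) + (1/2) ^ n * (\<Sum>k. 1 / (real k + 1)\<^sup>2)) + K * (1/4) ^ L"
proof -
  define m where "m = 2 * (n div L + 1)"
  let ?R = "repeated_hits M n m E"
  have "real (n div L) \<le> n / L"
    by (rule of_nat_div_le_of_nat)
  then have "real (n div L) / n \<le> 1 / L"
    using n L by (simp add: divide_le_eq field_simps)
  moreover have "real m / n = 2 * (real (n div L) / n) + 2 / n"
    by (simp add: m_def add_divide_distrib)
  moreover have "measure (PiM {..<n} (\<lambda>_. M)) ?R \<le> (1/2) ^ n * (\<Sum>k. 1 / (real k + 1)\<^sup>2)"
    unfolding m_def using n by (intro measure_repeated_hits_le_half_power[OF prob E small L B]) simp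
  ultimately have "real m / n + measure (PiM {..<n} (\<lambda>_. M)) ?R
      \<le> (2 / L + 2 / n) + (1/2) ^ n * (\<Sum>k. 1 / (real k + 1)\<^sup>2)"
    by linarith
  then have "K * (real m / n + measure (PiM {..<n} (\<lambda>_. M)) ?R)
      \<le> K * ((2 / L + 2 / n) + (1/2) ^ n * (\<Sum>k. 1 / (real k + 1)\<^sup>2))"
    by (rule mult_left_mono) simp
  moreover have "Delta n \<mu> \<le> card J * (2 / sqrt n)
      + K * (real m / n + measure (PiM {..<n} (\<lambda>_. M)) ?R) + K * (1/4) ^ L"
    using n by (intro Delta_le_cover_bound[OF prob XM mu J E small cover]) simp
  ultimately show ?thesis
    by linarith
qed

lemma quarter_power_le_inverse: "1 \<le> L \<Longrightarrow> (1/4 :: real) ^ L \<le> 1 / L"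
proof -
  assume "1 \<le> L"
  have "real L < 2 ^ L"
    by (rule of_nat_less_two_power)
  also have "(2::real) ^ L \<le> 4 ^ L"
    by (rule power_mono) auto
  finally show ?thesis
    using \<open>1 \<le> L\<close> by (simp add: power_one_over frac_le)
qed

lemma eventually_Delta_less:
  fixes K L :: nat and \<eta> :: real
  assumes prob: "prob_space M" and XM: "X \<in> measurable M bin_seq" and mu: "\<mu> = distr M bin_seq X"
    and J: "finite J" and E: "\<And>k. E k \<in> sets M" and small: "\<And>k. measure M (E k) \<le> (1/4) ^ L"
    and log_ratio: "(SUP k. log_ratio k (measure M (E k))) < \<infinity>"
    and cover: "\<And>a. \<exists>b\<in>J. \<exists>Ka. finite Ka \<and> card Ka \<le> K \<and>
                   {\<omega> \<in> space M. X \<omega> a \<noteq> X \<omega> b} \<subseteq> (\<Union>k\<in>Ka. E k)"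
    and L: "1 \<le> L" and \<eta>: "3 * real K < \<eta> * L"
  shows "eventually (\<lambda>n. Delta n \<mu> < \<eta>) sequentially"
proof -
  obtain B :: nat where B_sup: "(SUP k. log_ratio k (measure M (E k))) < real B"
    using log_ratio less_PInf_Ex_of_nat by auto
  have B: "log_ratio k (measure M (E k)) \<le> real B" for k
    using le_less_trans[OF SUP_upper[OF UNIV_I] B_sup] by (rule order.strict_implies_order)
  define S where "S = (\<Sum>k. 1 / (real k + 1)\<^sup>2)"
  define u where "u n = card J * (2 / sqrt n) + K * ((2 / L + 2 / n) + (1/2) ^ n * S) + K * (1/4) ^ L"
    for n :: nat
  have "(\<lambda>n. 2 / sqrt (real n)) \<longlonglongrightarrow> 0" "(\<lambda>n. 2 / real n) \<longlonglongrightarrow> 0" "(\<lambda>n. (1/2) ^ n) \<longlonglongrightarrow> (0::real)"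
    by real_asymp+
  then have "u \<longlonglongrightarrow> real (card J) * 0 + real K * ((2 / L + 0) + 0 * S) + real K * (1/4) ^ L"
    unfolding u_def by (intro tendsto_add tendsto_mult tendsto_const)
  moreover have "real K * (2 / L) + real K * (1/4) ^ L < \<eta>"
  proof -
    have "real K * (1/4) ^ L \<le> real K / L"
      using mult_left_mono[OF quarter_power_le_inverse[OF L], of "real K"] by simp
    moreover have "3 * (real K / L) < \<eta>"
      using \<eta> L by (simp add: field_simps)
    ultimately show ?thesis
      by simp
  qed
  ultimately have "eventually (\<lambda>n. u n < \<eta>) sequentially"
    by (intro order_tendstoD(2)) simp_all
  moreover have "eventually (\<lambda>n. 2 * B * L < n) sequentially"
    by (rule eventually_gt_at_top)
  ultimately show ?thesis
  proof eventually_elim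
    case (elim n)
    then show ?case
      using Delta_le_scale_bound[OF prob XM mu J E small B cover L elim(2)]
      unfolding u_def S_def by linarith
  qed
qed

theorem theorem9:
  fixes M :: "'w measure" and X :: "'w \<Rightarrow> nat \<Rightarrow> bool" and \<mu> :: "(nat \<Rightarrow> bool) measure"
  assumes "prob_space M"
    and "X \<in> measurable M bin_seq"
    and "\<mu> = distr M bin_seq X"
    and "totally_bounded_xi M X"
    and "\<exists>K::nat. K \<ge> 1 \<and>
           (\<forall>\<epsilon>::real. \<epsilon> > 0 \<longrightarrow>
              (\<exists>E :: nat \<Rightarrow> 'w set. \<exists>J :: nat set.
                 finite J \<and> (\<forall>k. E k \<in> sets M) \<and>
                 (\<forall>k. measure M (E k) \<le> \<epsilon>) \<and>
                 (SUP k. log_ratio k (measure M (E k))) < \<infinity> \<and>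
                 (\<forall>i. \<exists>j\<in>J. \<exists>\<K> :: nat set. finite \<K> \<and> card \<K> \<le> K \<and>
                      {\<omega> \<in> space M. X \<omega> i \<noteq> X \<omega> j} \<subseteq> (\<Union>k\<in>\<K>. E k))))"
  shows "(\<lambda>n. Delta n \<mu>) \<longlonglongrightarrow> 0"
proof (rule order_tendstoI)
  show "eventually (\<lambda>n. a < Delta n \<mu>) sequentially" if "a < 0" for a
    using Delta_nonneg[OF assms(1-3)] that by (auto intro!: always_eventually intro: less_le_trans)
  obtain K :: nat where cover: "\<And>\<epsilon>. \<epsilon> > 0 \<Longrightarrow>
      \<exists>E J. finite J \<and> (\<forall>k. E k \<in> sets M) \<and> (\<forall>k. measure M (E k) \<le> \<epsilon>) \<and>
        (SUP k. log_ratio k (measure M (E k))) < \<infinity> \<and>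
        (\<forall>i. \<exists>j\<in>J. \<exists>Ka. finite Ka \<and> card Ka \<le> K \<and> {\<omega> \<in> space M. X \<omega> i \<noteq> X \<omega> j} \<subseteq> (\<Union>k\<in>Ka. E k))"
    using assms(5) by blast
  show "eventually (\<lambda>n. Delta n \<mu> < \<eta>) sequentially" if "0 < \<eta>" for \<eta>
  proof -
    obtain L :: nat where "max 1 (3 * real K / \<eta>) < L"
      using reals_Archimedean2 by blast
    then have L: "1 \<le> L" "3 * real K < \<eta> * L"
      using \<open>0 < \<eta>\<close> by (auto simp: field_simps)
    obtain E J where "finite J" "\<And>k. E k \<in> sets M" "\<And>k. measure M (E k) \<le> (1/4) ^ L"
      "(SUP k. log_ratio k (measure M (E k))) < \<infinity>"
      "\<And>i. \<exists>j\<in>J. \<exists>Ka. finite Ka \<and> card Ka \<le> K \<and> {\<omega> \<in> space M. X \<omega> i \<noteq> X \<omega> j} \<subseteq> (\<Union>k\<in>Ka. E k)"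
      using cover[of "(1/4) ^ L"] by auto
    from this L show ?thesis
      by (rule eventually_Delta_less[OF assms(1-3)])
  qed
qed

end
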